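(* Let $G$ be a Lie group with multiplication $\mu(x,y)=xy$, division $\delta(x,y)=x^{-1}y$ (both maps $G\times G\to G$) and inversion $I\colon G\to G$, $I(x)=x^{-1}$. Then $\mathrm{D}(\mu,\delta)=\mathrm{D}(\mathrm{id}_G,I)$.
   Context: For continuous maps $f,g\colon X\to Y$, the homotopic distance $\mathrm{D}(f,g)$ is the least integer $n\geq 0$ such that there is an open cover $\{U_0,\dots,U_n\}$ of $X$ with $f|_{U_j}\simeq g|_{U_j}$ for all $j$; if no such cover exists, $\mathrm{D}(f,g)=\infty$. *)

theory Defs
  imports "HOL-Analysis.Analysis" "HOL-Algebra.Group" "HOL-Library.Extended_Nat"
begin

definition hd_cover :: "'a topology \<Rightarrow> 'b topology \<Rightarrow> ('a \<Rightarrow> 'b) \<Rightarrow> ('a \<Rightarrow> 'b) \<Rightarrow> nat \<Rightarrow> bool"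
  where "hd_cover X Y f g n \<longleftrightarrow>
    (\<exists>U :: nat \<Rightarrow> 'a set.
        (\<forall>j\<le>n. openin X (U j) \<and> homotopic_with (\<lambda>_. True) (subtopology X (U j)) Y f g)
      \<and> topspace X \<subseteq> (\<Union>j\<le>n. U j))"

text \<open>Homotopic distance: least such \<open>n\<close>, and \<open>\<infinity>\<close> (= Inf of the empty set) if none exists.\<close>
definition homotopic_distance :: "'a topology \<Rightarrow> 'b topology \<Rightarrow> ('a \<Rightarrow> 'b) \<Rightarrow> ('a \<Rightarrow> 'b) \<Rightarrow> enat"
  where "homotopic_distance X Y f g = Inf (enat ` {n. hd_cover X Y f g n})"

fun iter_deriv :: "'a::real_normed_vector list \<Rightarrow> ('a \<Rightarrow> 'b::real_normed_vector) \<Rightarrow> 'a \<Rightarrow> 'b"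
  where "iter_deriv [] f = f"
  | "iter_deriv (v # vs) f = (\<lambda>x. frechet_derivative (iter_deriv vs f) (at x) v)"

definition smooth_on :: "'a::euclidean_space set \<Rightarrow> ('a \<Rightarrow> 'b::euclidean_space) \<Rightarrow> bool"
  where "smooth_on S f \<longleftrightarrow> open S \<and> (\<forall>vs. (\<forall>x\<in>S. iter_deriv vs f differentiable (at x)))"

definition is_chart :: "'a topology \<Rightarrow> 'a set \<times> ('a \<Rightarrow> 'e::euclidean_space) \<Rightarrow> bool"
  where "is_chart X c \<longleftrightarrow> openin X (fst c) \<and> open (snd c ` fst c) \<and>
      homeomorphic_map (subtopology X (fst c)) (top_of_set (snd c ` fst c)) (snd c)"

definition chart_inv :: "'a set \<times> ('a \<Rightarrow> 'e) \<Rightarrow> 'e \<Rightarrow> 'a"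
  where "chart_inv c = inv_into (fst c) (snd c)"

definition smooth_atlas :: "'a topology \<Rightarrow> ('a set \<times> ('a \<Rightarrow> 'e::euclidean_space)) set \<Rightarrow> bool"
  where "smooth_atlas X A \<longleftrightarrow>
     (\<forall>c\<in>A. is_chart X c) \<and> topspace X \<subseteq> (\<Union>c\<in>A. fst c) \<and>
     (\<forall>c\<in>A. \<forall>d\<in>A. smooth_on (snd c ` (fst c \<inter> fst d)) (snd d \<circ> chart_inv c))"

definition lie_group :: "('a, 'm) monoid_scheme \<Rightarrow> 'a topology \<Rightarrow> ('a set \<times> ('a \<Rightarrow> 'e::euclidean_space)) set \<Rightarrow> bool"
  where "lie_group G X A \<longleftrightarrow>
     group G \<and> carrier G = topspace X \<and> Hausdorff_space X \<and> second_countable X \<and>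
     continuous_map (prod_topology X X) X (\<lambda>(x, y). x \<otimes>\<^bsub>G\<^esub> y) \<and>
     continuous_map X X (\<lambda>x. inv\<^bsub>G\<^esub> x) \<and>
     smooth_atlas X A \<and>
     (\<forall>c\<in>A. \<forall>d\<in>A. \<forall>e\<in>A.
        smooth_on {(a, b). a \<in> snd c ` fst c \<and> b \<in> snd d ` fst d \<and>
                           chart_inv c a \<otimes>\<^bsub>G\<^esub> chart_inv d b \<in> fst e}
                  (\<lambda>(a, b). snd e (chart_inv c a \<otimes>\<^bsub>G\<^esub> chart_inv d b))) \<and>
     (\<forall>c\<in>A. \<forall>e\<in>A.
        smooth_on {a. a \<in> snd c ` fst c \<and> inv\<^bsub>G\<^esub> (chart_inv c a) \<in> fst e}
                  (\<lambda>a. snd e (inv\<^bsub>G\<^esub> (chart_inv c a))))"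

end

theory Submission
  imports Defs
begin

text \<open>Write \<open>\<mu>\<close> for multiplication. Division is \<open>\<mu> \<circ> (I \<times> id)\<close> and multiplication is
  \<open>\<mu> \<circ> (id \<times> id)\<close>; since homotopic distance does not grow under post-composition with a continuous
  map, nor under taking the product with an identity, \<open>D(\<mu>, \<delta>) \<le> D(id, I)\<close>. Conversely, with
  \<open>e x = (x, 1)\<close> we have \<open>id = \<mu> \<circ> e\<close> and \<open>I = \<delta> \<circ> e\<close>, and precomposition does not increase the
  distance either.\<close>

lemma hd_coverI:
  assumes "\<And>j. j \<le> n \<Longrightarrow> openin X (U j)"
    and "\<And>j. j \<le> n \<Longrightarrow> homotopic_with (\<lambda>_. True) (subtopology X (U j)) Y f g"
    and "topspace X \<subseteq> (\<Union>j\<le>n. U j)"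
  shows "hd_cover X Y f g n"
  using assms unfolding hd_cover_def by blast

lemma hd_cover_eq:
  assumes "hd_cover X Y f g n"
    and f': "\<And>x. x \<in> topspace X \<Longrightarrow> f' x = f x" and g': "\<And>x. x \<in> topspace X \<Longrightarrow> g' x = g x"
  shows "hd_cover X Y f' g' n"
proof -
  obtain U where U: "\<And>j. j \<le> n \<Longrightarrow> openin X (U j)"
      "\<And>j. j \<le> n \<Longrightarrow> homotopic_with (\<lambda>_. True) (subtopology X (U j)) Y f g"
    and cover: "topspace X \<subseteq> (\<Union>j\<le>n. U j)"
    using assms(1) unfolding hd_cover_def by blast
  show ?thesis
  proof (rule hd_coverI[of n X U, OF U(1) _ cover])
    fix j assume "j \<le> n"
    then show "homotopic_with (\<lambda>_. True) (subtopology X (U j)) Y f' g'"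
      by (rule homotopic_with_eq[OF U(2)]) (simp_all add: f' g')
  qed
qed

lemma hd_cover_compose_left:
  assumes "hd_cover X Y f g n" and h: "continuous_map Y Z h"
  shows "hd_cover X Z (h \<circ> f) (h \<circ> g) n"
proof -
  obtain U where U: "\<And>j. j \<le> n \<Longrightarrow> openin X (U j)"
      "\<And>j. j \<le> n \<Longrightarrow> homotopic_with (\<lambda>_. True) (subtopology X (U j)) Y f g"
    and cover: "topspace X \<subseteq> (\<Union>j\<le>n. U j)"
    using assms(1) unfolding hd_cover_def by blast
  show ?thesis
  proof (rule hd_coverI[of n X U, OF U(1) _ cover])
    fix j assume "j \<le> n"
    show "homotopic_with (\<lambda>_. True) (subtopology X (U j)) Z (h \<circ> f) (h \<circ> g)"
      by (rule homotopic_with_compose_continuous_map_left[OF U(2)[OF \<open>j \<le> n\<close>] h]) simp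
  qed
qed

lemma hd_cover_compose_right:
  assumes "hd_cover X Y f g n" and k: "continuous_map W X k"
  shows "hd_cover W Y (f \<circ> k) (g \<circ> k) n"
proof -
  obtain U where U: "\<And>j. j \<le> n \<Longrightarrow> openin X (U j)"
      "\<And>j. j \<le> n \<Longrightarrow> homotopic_with (\<lambda>_. True) (subtopology X (U j)) Y f g"
    and cover: "topspace X \<subseteq> (\<Union>j\<le>n. U j)"
    using assms(1) unfolding hd_cover_def by blast
  define V where "V j = {w \<in> topspace W. k w \<in> U j}" for j
  show ?thesis
  proof (rule hd_coverI[of n W V])
    show "topspace W \<subseteq> (\<Union>j\<le>n. V j)"
      using cover continuous_map_image_subset_topspace[OF k] by (auto simp: V_def)
    fix j assume j: "j \<le> n"
    show "openin W (V j)"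
      unfolding V_def using k U(1)[OF j] by (rule openin_continuous_map_preimage)
    have "continuous_map (subtopology W (V j)) (subtopology X (U j)) k"
      by (rule continuous_map_into_subtopology[OF continuous_map_from_subtopology[OF k]])
        (auto simp: V_def)
    then show "homotopic_with (\<lambda>_. True) (subtopology W (V j)) Y (f \<circ> k) (g \<circ> k)"
      by (rule homotopic_with_compose_continuous_map_right[OF U(2)[OF j]]) simp
  qed
qed

lemma hd_cover_prod_id:
  assumes "hd_cover X Y f g n"
  shows "hd_cover (prod_topology X Z) (prod_topology Y Z) (\<lambda>(x, z). (f x, z)) (\<lambda>(x, z). (g x, z)) n"
proof -
  obtain U where U: "\<And>j. j \<le> n \<Longrightarrow> openin X (U j)"
      "\<And>j. j \<le> n \<Longrightarrow> homotopic_with (\<lambda>_. True) (subtopology X (U j)) Y f g"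
    and cover: "topspace X \<subseteq> (\<Union>j\<le>n. U j)"
    using assms unfolding hd_cover_def by blast
  show ?thesis
  proof (rule hd_coverI[of n _ "\<lambda>j. U j \<times> topspace Z"])
    show "topspace (prod_topology X Z) \<subseteq> (\<Union>j\<le>n. U j \<times> topspace Z)"
      using cover by auto
    fix j assume j: "j \<le> n"
    show "openin (prod_topology X Z) (U j \<times> topspace Z)"
      using U(1)[OF j] by (simp add: openin_prod_Times_iff)
    have "homotopic_with (\<lambda>_. True) (prod_topology (subtopology X (U j)) Z) (prod_topology Y Z)
        (\<lambda>p. (f (fst p), id (snd p))) (\<lambda>p. (g (fst p), id (snd p)))"
      by (rule homotopic_with_prod_topology[OF U(2)[OF j]]) simp_all
    then show "homotopic_with (\<lambda>_. True) (subtopology (prod_topology X Z) (U j \<times> topspace Z))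
        (prod_topology Y Z) (\<lambda>(x, z). (f x, z)) (\<lambda>(x, z). (g x, z))"
      by (simp add: prod_topology_subtopology(1) split_def)
  qed
qed

lemma homotopic_distance_mono:
  assumes "\<And>n. hd_cover X Y f g n \<Longrightarrow> hd_cover X' Y' f' g' n"
  shows "homotopic_distance X' Y' f' g' \<le> homotopic_distance X Y f g"
  unfolding homotopic_distance_def using assms by (intro Inf_superset_mono image_mono) blast

lemma homotopic_distance_cong:
  assumes "\<And>x. x \<in> topspace X \<Longrightarrow> f' x = f x" "\<And>x. x \<in> topspace X \<Longrightarrow> g' x = g x"
  shows "homotopic_distance X Y f' g' = homotopic_distance X Y f g"
proof (intro antisym homotopic_distance_mono)
  show "hd_cover X Y f' g' n" if "hd_cover X Y f g n" for n
    using that assms by (rule hd_cover_eq)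
  show "hd_cover X Y f g n" if "hd_cover X Y f' g' n" for n
    using that by (rule hd_cover_eq) (simp_all add: assms)
qed

lemma homotopic_distance_compose_left_le:
  "continuous_map Y Z h \<Longrightarrow> homotopic_distance X Z (h \<circ> f) (h \<circ> g) \<le> homotopic_distance X Y f g"
  by (intro homotopic_distance_mono) (rule hd_cover_compose_left)

lemma homotopic_distance_compose_right_le:
  "continuous_map W X k \<Longrightarrow> homotopic_distance W Y (f \<circ> k) (g \<circ> k) \<le> homotopic_distance X Y f g"
  by (intro homotopic_distance_mono) (rule hd_cover_compose_right)

lemma homotopic_distance_prod_id_le:
  "homotopic_distance (prod_topology X Z) (prod_topology Y Z)
     (\<lambda>(x, z). (f x, z)) (\<lambda>(x, z). (g x, z)) \<le> homotopic_distance X Y f g"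
  by (intro homotopic_distance_mono) (rule hd_cover_prod_id)

theorem proposition4p3:
  fixes G :: "('a, 'm) monoid_scheme" and X :: "'a topology"
    and A :: "('a set \<times> ('a \<Rightarrow> 'e::euclidean_space)) set"
  assumes "lie_group G X A"
  shows "homotopic_distance (prod_topology X X) X
            (\<lambda>(x, y). x \<otimes>\<^bsub>G\<^esub> y) (\<lambda>(x, y). inv\<^bsub>G\<^esub> x \<otimes>\<^bsub>G\<^esub> y)
       = homotopic_distance X X id (\<lambda>x. inv\<^bsub>G\<^esub> x)"
proof -
  let ?mult = "\<lambda>(x, y). x \<otimes>\<^bsub>G\<^esub> y" and ?div = "\<lambda>(x, y). inv\<^bsub>G\<^esub> x \<otimes>\<^bsub>G\<^esub> y"
  have G: "group G" "carrier G = topspace X" and mult: "continuous_map (prod_topology X X) X ?mult"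
    using assms unfolding lie_group_def by auto
  have "homotopic_distance (prod_topology X X) X ?mult ?div
      = homotopic_distance (prod_topology X X) X
          (?mult \<circ> (\<lambda>(x, y). (id x, y))) (?mult \<circ> (\<lambda>(x, y). (inv\<^bsub>G\<^esub> x, y)))"
    by (rule homotopic_distance_cong) auto
  also have "\<dots> \<le> homotopic_distance (prod_topology X X) (prod_topology X X)
      (\<lambda>(x, y). (id x, y)) (\<lambda>(x, y). (inv\<^bsub>G\<^esub> x, y))"
    using mult by (rule homotopic_distance_compose_left_le)
  also have "\<dots> \<le> homotopic_distance X X id (\<lambda>x. inv\<^bsub>G\<^esub> x)"
    by (rule homotopic_distance_prod_id_le)
  finally have mult_div_le: "homotopic_distance (prod_topology X X) X ?mult ?div
      \<le> homotopic_distance X X id (\<lambda>x. inv\<^bsub>G\<^esub> x)" .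
  have "\<one>\<^bsub>G\<^esub> \<in> topspace X"
    using G by (metis group.is_monoid monoid.one_closed)
  then have pair_one: "continuous_map X (prod_topology X X) (\<lambda>x. (x, \<one>\<^bsub>G\<^esub>))"
    by (simp add: continuous_map_pairwise o_def)
  have "homotopic_distance X X id (\<lambda>x. inv\<^bsub>G\<^esub> x)
      = homotopic_distance X X (?mult \<circ> (\<lambda>x. (x, \<one>\<^bsub>G\<^esub>))) (?div \<circ> (\<lambda>x. (x, \<one>\<^bsub>G\<^esub>)))"
    using G(1) by (intro homotopic_distance_cong)
      (simp_all add: G(2)[symmetric] group.is_monoid monoid.r_one group.inv_closed)
  also have "\<dots> \<le> homotopic_distance (prod_topology X X) X ?mult ?div"
    using pair_one by (rule homotopic_distance_compose_right_le)
  finally show ?thesis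
    using mult_div_le by (rule antisym[rotated])
qed

end
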